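(* Let $X$ be a finite or countably infinite set and $\mathcal{S}=\langle x_1,\dots,x_n\rangle\in X^n$ a sample. For any constant $C>1$ and probability distributions $q,q'$ on $X$ such that $\frac1C q(x)\le q'(x)\le Cq(x)$ for all $x\in X$, the distinguisher $f:X\to[0,1]$ defined by $$f(x)=\frac{1}{2\log C}\log\frac{Cq(x)}{q'(x)}$$ has training advantage (relative to $q$ and $\mathcal{S}$) $$\hat\alpha(f)\ge\frac{\hat{L}(q;\mathcal{S})-\hat{L}(q';\mathcal{S})}{2\log C}.$$
   Context: The log-loss of a distribution $q$ on the sample is $\hat{L}(q;\mathcal{S})=-\frac{1}{n}\sum_{i=1}^n\log q(x_i)$. The empirical expectation is $\hat{\mathrm{E}}_{\mathcal{S}}[h(x)]=\frac1n\sum_{i=1}^n h(x_i)$. The training advantage of $f:X\to[0,1]$ relative to $q$ and $\mathcal{S}$ is $\hat\alpha(f)=\mathrm{E}_{x\sim q}[f(x)]-\hat{\mathrm{E}}_{\mathcal{S}}[f(x)]$. *)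

theory Defs
  imports "HOL-Probability.Probability"
begin

definition emp_exp :: "'a list \<Rightarrow> ('a \<Rightarrow> real) \<Rightarrow> real" where
  "emp_exp S h = (\<Sum>i<length S. h (S ! i)) / real (length S)"

definition log_loss :: "'a pmf \<Rightarrow> 'a list \<Rightarrow> real" where
  "log_loss q S = - (\<Sum>i<length S. ln (pmf q (S ! i))) / real (length S)"

definition train_adv :: "'a pmf \<Rightarrow> 'a list \<Rightarrow> ('a \<Rightarrow> real) \<Rightarrow> real" where
  "train_adv q S f = measure_pmf.expectation q f - emp_exp S f"

end

theory Submission
  imports Defs
begin

text \<open>Where \<open>q x > 0\<close>, the distinguisher is \<open>f x = 1/2 + ln (q x / q' x) / (2 ln C)\<close>, and the
  bounds on \<open>q' / q\<close> place it in \<open>[0, 1]\<close>. Its \<open>q\<close>-expectation is therefore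
  \<open>1/2 + KL(q || q') / (2 ln C) \<ge> 1/2\<close> by Gibbs' inequality, while pointwise
  \<open>f x \<le> 1/2 + (ln (q x) - ln (q' x)) / (2 ln C)\<close>, so its empirical mean on the sample is at
  most \<open>1/2 + (L(q') - L(q)) / (2 ln C)\<close>.\<close>

lemma ln_scaled_ratio_bounds:
  fixes a b C :: real
  assumes "1 \<le> C" "0 \<le> a" "a / C \<le> b" "b \<le> C * a"
  shows "0 \<le> ln (C * a / b)" "ln (C * a / b) \<le> 2 * ln C"
    and "ln (C * a / b) \<le> ln C + ln a - ln b"
proof -
  have "0 \<le> ln (C * a / b) \<and> ln (C * a / b) \<le> 2 * ln C \<and> ln (C * a / b) \<le> ln C + ln a - ln b"
  proof (cases "a = 0")
    case True
    then have "b = 0"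
      using assms(3,4) by simp
    with True assms(1) show ?thesis
      by simp
  next
    case False
    with assms(1,2) have "0 < a" "0 < a / C"
      by simp_all
    with assms(3) have "0 < b"
      by linarith
    with \<open>0 < a\<close> assms have "1 \<le> C * a / b" "C * a / b \<le> C * C"
      by (auto simp: field_simps)
    then have "0 \<le> ln (C * a / b)" "ln (C * a / b) \<le> ln (C * C)"
      by simp_all
    moreover have "ln (C * a / b) = ln C + ln a - ln b"
      using \<open>0 < a\<close> \<open>0 < b\<close> assms(1) by (simp add: ln_div ln_mult)
    ultimately show ?thesis
      using assms(1) by (simp add: ln_mult)
  qed
  then show "0 \<le> ln (C * a / b)" "ln (C * a / b) \<le> 2 * ln C"
    and "ln (C * a / b) \<le> ln C + ln a - ln b"
    by simp_all
qed

lemma nn_integral_pmf_ratio_le_1: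
  "(\<integral>\<^sup>+ x. ennreal (pmf q' x / pmf q x) \<partial>measure_pmf q) \<le> 1"
proof -
  have "(\<integral>\<^sup>+ x. ennreal (pmf q' x / pmf q x) \<partial>measure_pmf q)
      = \<integral>\<^sup>+ x. ennreal (pmf q x) * ennreal (pmf q' x / pmf q x) \<partial>count_space UNIV"
    by (rule nn_integral_measure_pmf)
  also have "\<dots> \<le> \<integral>\<^sup>+ x. ennreal (pmf q' x) \<partial>count_space UNIV"
  proof (rule nn_integral_mono)
    fix x
    show "ennreal (pmf q x) * ennreal (pmf q' x / pmf q x) \<le> ennreal (pmf q' x)"
      by (cases "pmf q x = 0") (simp_all add: ennreal_mult''[symmetric])
  qed
  also have "\<dots> = 1"
    by (simp add: nn_integral_pmf measure_pmf.emeasure_space_1)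
  finally show ?thesis .
qed

lemma integrable_pmf_ratio: "integrable (measure_pmf q) (\<lambda>x. pmf q' x / pmf q x)"
  using nn_integral_pmf_ratio_le_1[where q=q and q'=q']
  by (intro integrableI_nonneg) (auto intro: order.strict_trans1)

lemma expectation_pmf_ratio_le_1:
  "measure_pmf.expectation q (\<lambda>x. pmf q' x / pmf q x) \<le> 1"
proof -
  have "measure_pmf.expectation q (\<lambda>x. pmf q' x / pmf q x)
      = enn2real (\<integral>\<^sup>+ x. ennreal (pmf q' x / pmf q x) \<partial>measure_pmf q)"
    by (rule integral_eq_nn_integral) auto
  also have "\<dots> \<le> 1"
    using nn_integral_pmf_ratio_le_1[where q=q and q'=q'] by (intro enn2real_leI) simp_all
  finally show ?thesis .
qed

text \<open>Gibbs' inequality. The support hypothesis is needed because of the junk value \<open>ln 0 = 0\<close>.\<close>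
lemma expectation_ln_pmf_ratio_nonneg:
  assumes integrable_ln: "integrable (measure_pmf q) (\<lambda>x. ln (pmf q x / pmf q' x))"
    and supp: "set_pmf q \<subseteq> set_pmf q'"
  shows "0 \<le> measure_pmf.expectation q (\<lambda>x. ln (pmf q x / pmf q' x))"
proof -
  have "AE x in q. 1 - pmf q' x / pmf q x \<le> ln (pmf q x / pmf q' x)"
  proof (rule AE_pmfI)
    fix x assume "x \<in> set_pmf q"
    with supp have pos: "0 < pmf q x" "0 < pmf q' x"
      by (auto simp: pmf_positive)
    then have "ln (pmf q' x / pmf q x) \<le> pmf q' x / pmf q x - 1"
      by (intro ln_le_minus_one) simp
    with pos show "1 - pmf q' x / pmf q x \<le> ln (pmf q x / pmf q' x)"
      by (simp add: ln_div)
  qed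
  then have "measure_pmf.expectation q (\<lambda>x. 1 - pmf q' x / pmf q x)
      \<le> measure_pmf.expectation q (\<lambda>x. ln (pmf q x / pmf q' x))"
    using integrable_ln integrable_pmf_ratio
    by (intro integral_mono_AE Bochner_Integration.integrable_diff) auto
  moreover have "measure_pmf.expectation q (\<lambda>x. 1 - pmf q' x / pmf q x)
      = 1 - measure_pmf.expectation q (\<lambda>x. pmf q' x / pmf q x)"
    using integrable_pmf_ratio[where q=q and q'=q']
    by (simp add: measure_pmf.prob_space)
  ultimately show ?thesis
    using expectation_pmf_ratio_le_1[of q q'] by linarith
qed

lemma emp_exp_mono:
  assumes "\<And>x. x \<in> set S \<Longrightarrow> h x \<le> g x"
  shows "emp_exp S h \<le> emp_exp S g"
  unfolding emp_exp_def
  using assms by (intro divide_right_mono sum_mono) auto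

lemma emp_exp_add: "emp_exp S (\<lambda>x. h x + g x) = emp_exp S h + emp_exp S g"
  by (simp add: emp_exp_def sum.distrib add_divide_distrib)

lemma emp_exp_diff: "emp_exp S (\<lambda>x. h x - g x) = emp_exp S h - emp_exp S g"
  by (simp add: emp_exp_def sum_subtractf diff_divide_distrib)

lemma emp_exp_divide: "emp_exp S (\<lambda>x. h x / c) = emp_exp S h / c"
  by (simp add: emp_exp_def sum_divide_distrib[symmetric])

lemma emp_exp_const: "S \<noteq> [] \<Longrightarrow> emp_exp S (\<lambda>_. c) = c"
  by (simp add: emp_exp_def)

lemma log_loss_eq_emp_exp: "log_loss q S = - emp_exp S (\<lambda>x. ln (pmf q x))"
  by (simp add: log_loss_def emp_exp_def)

lemma expectation_ln_scaled_pmf_ratio_ge: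
  fixes C :: real
  assumes C: "1 \<le> C"
    and lower: "\<And>x. pmf q x / C \<le> pmf q' x" and upper: "\<And>x. pmf q' x \<le> C * pmf q x"
  shows "ln C \<le> measure_pmf.expectation q (\<lambda>x. ln (C * pmf q x / pmf q' x))"
proof -
  let ?r = "\<lambda>x. ln (C * pmf q x / pmf q' x)" and ?kl = "\<lambda>x. ln (pmf q x / pmf q' x)"
  note bounds = ln_scaled_ratio_bounds[OF C pmf_nonneg lower upper]
  have supp: "set_pmf q \<subseteq> set_pmf q'"
  proof
    fix x assume "x \<in> set_pmf q"
    then have "0 < pmf q x / C"
      using C by (simp add: pmf_positive)
    also have "\<dots> \<le> pmf q' x"
      by (fact lower)
    finally show "x \<in> set_pmf q'"
      by (simp add: set_pmf_iff)
  qed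
  have r_eq: "AE x in q. ?r x = ln C + ?kl x"
  proof (rule AE_pmfI)
    fix x assume "x \<in> set_pmf q"
    with supp have "0 < pmf q x" "0 < pmf q' x"
      by (auto intro: pmf_positive)
    with C show "?r x = ln C + ?kl x"
      by (simp add: ln_mult ln_div)
  qed
  have "integrable (measure_pmf q) ?r"
    using bounds(1,2) by (intro measure_pmf.integrable_const_bound[where B = "2 * ln C"]) auto
  then have "integrable (measure_pmf q) (\<lambda>x. ?r x - ln C)"
    by simp
  then have "integrable (measure_pmf q) ?kl"
    by (rule integrable_cong_AE_imp) (use r_eq in auto)
  have "ln C \<le> ln C + measure_pmf.expectation q ?kl"
    using expectation_ln_pmf_ratio_nonneg[OF \<open>integrable (measure_pmf q) ?kl\<close> supp] by simp
  also have "\<dots> = measure_pmf.expectation q (\<lambda>x. ln C + ?kl x)"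
    using \<open>integrable (measure_pmf q) ?kl\<close> by simp
  also have "\<dots> = measure_pmf.expectation q ?r"
    using r_eq by (intro integral_cong_AE) auto
  finally show ?thesis .
qed

lemma emp_exp_ln_scaled_pmf_ratio_le:
  fixes C :: real
  assumes C: "1 \<le> C"
    and lower: "\<And>x. pmf q x / C \<le> pmf q' x" and upper: "\<And>x. pmf q' x \<le> C * pmf q x"
    and "S \<noteq> []"
  shows "emp_exp S (\<lambda>x. ln (C * pmf q x / pmf q' x)) \<le> ln C + log_loss q' S - log_loss q S"
proof -
  have "emp_exp S (\<lambda>x. ln (C * pmf q x / pmf q' x))
      \<le> emp_exp S (\<lambda>x. ln C + ln (pmf q x) - ln (pmf q' x))"
    using ln_scaled_ratio_bounds(3)[OF C pmf_nonneg lower upper] by (rule emp_exp_mono)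
  also have "\<dots> = ln C + log_loss q' S - log_loss q S"
    using \<open>S \<noteq> []\<close> by (simp add: emp_exp_diff emp_exp_add emp_exp_const log_loss_eq_emp_exp)
  finally show ?thesis .
qed

theorem lemma2:
  fixes q q' :: "'a::countable pmf" and S :: "'a list" and C :: real
  assumes "C > 1"
    and "\<And>x. pmf q x / C \<le> pmf q' x"
    and "\<And>x. pmf q' x \<le> C * pmf q x"
  defines "f \<equiv> (\<lambda>x. ln (C * pmf q x / pmf q' x) / (2 * ln C))"
  shows "(\<forall>x. f x \<in> {0..1}) \<and>
         train_adv q S f \<ge> (log_loss q S - log_loss q' S) / (2 * ln C)"
proof -
  have C: "1 \<le> C" and lnC: "0 < ln C"
    using assms(1) by simp_all
  have "f x \<in> {0..1}" for x
    using ln_scaled_ratio_bounds(1,2)[OF C pmf_nonneg assms(2,3)] lnC by (simp add: f_def)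
  moreover have "1 / 2 \<le> measure_pmf.expectation q f"
    using expectation_ln_scaled_pmf_ratio_ge[OF C assms(2,3)] lnC by (simp add: f_def)
  moreover have "emp_exp S f \<le> 1 / 2 + (log_loss q' S - log_loss q S) / (2 * ln C)" if "S \<noteq> []"
    using emp_exp_ln_scaled_pmf_ratio_le[OF C assms(2,3) that] lnC
    by (simp add: f_def emp_exp_divide field_simps)
  ultimately show ?thesis
    by (cases "S = []") (auto simp: train_adv_def emp_exp_def log_loss_def diff_divide_distrib)
qed

end
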